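(* Let $g\colon\mathbb{R}^d\to\mathbb{R}$ be differentiable with $L_1$-Lipschitz gradient, and let $G$ be an $(a,b)$-inexact gradient oracle for $g$ with $0\le a\le1/20$, $b\ge0$. Let $0<\eta\le\min\{1,1/L_1\}$, $y_0\in\mathbb{R}^d$, and $y_{t+1}=y_t-\eta G(y_t)$. Then for all integers $0\le\tau\le t$, $$\|y_\tau-y_0\|^2\le16\eta t\frac{(1+a)^2}{1-a}\Big(g(y_0)-g(y_t)+(5+\eta)tb^2\Big).$$
   Context: A map $G\colon\mathbb{R}^d\to\mathbb{R}^d$ is an $(a,b)$-inexact gradient oracle for $g$ if $\|\nabla g(x)-G(x)\|\le a\|\nabla g(x)\|+b$ for all $x\in\mathbb{R}^d$. *)

theory Defs
  imports "HOL-Analysis.Analysis"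
begin

definition inexact_gradient_oracle ::
  "real \<Rightarrow> real \<Rightarrow> ('a::real_normed_vector \<Rightarrow> 'a) \<Rightarrow> ('a \<Rightarrow> 'a) \<Rightarrow> bool" where
  "inexact_gradient_oracle a b grad_g G \<longleftrightarrow>
     (\<forall>x. norm (grad_g x - G x) \<le> a * norm (grad_g x) + b)"

end

theory Submission
  imports Defs
begin

text \<open>With \<open>\<eta> L\<^sub>1 \<le> 1\<close>, the descent lemma turns a step \<open>x - \<eta> w\<close> along any direction \<open>w\<close> into a
  decrease of \<open>g\<close> by at least \<open>\<eta>/2 (\<parallel>\<nabla>g\<parallel>\<^sup>2 - \<parallel>\<nabla>g - w\<parallel>\<^sup>2)\<close>. For an \<open>(a,b)\<close>-inexact direction with
  \<open>a \<le> 1/20\<close> this quantity controls \<open>\<parallel>w\<parallel>\<^sup>2\<close> up to an additive \<open>b\<^sup>2\<close> term, so summing along the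
  iteration bounds \<open>\<eta> \<Sum>\<^sub>k<\<^sub>t \<parallel>G(y\<^sub>k)\<parallel>\<^sup>2\<close> by \<open>g(y\<^sub>0) - g(y\<^sub>t)\<close> plus \<open>O(t b\<^sup>2)\<close>. Finally
  \<open>y\<^sub>\<tau> - y\<^sub>0 = -\<eta> \<Sum>\<^sub>k<\<^sub>\<tau> G(y\<^sub>k)\<close>, and Cauchy-Schwarz bounds its squared norm by
  \<open>\<eta>\<^sup>2 \<tau> \<Sum>\<^sub>k<\<^sub>\<tau> \<parallel>G(y\<^sub>k)\<parallel>\<^sup>2\<close>.\<close>

lemma descent_lemma:
  fixes g :: "'a::real_inner \<Rightarrow> real" and grad_g :: "'a \<Rightarrow> 'a"
  assumes grad: "\<And>x. (g has_derivative (\<lambda>h. grad_g x \<bullet> h)) (at x)"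
    and lip: "L-lipschitz_on UNIV grad_g"
  shows "g (x + h) \<le> g x + grad_g x \<bullet> h + L / 2 * (norm h)\<^sup>2"
proof -
  define \<phi> where "\<phi> s = g (x + s *\<^sub>R h) - s * (grad_g x \<bullet> h) - L/2 * s\<^sup>2 * (norm h)\<^sup>2" for s
  have "\<phi> 1 \<le> \<phi> 0"
  proof (rule DERIV_nonpos_imp_nonincreasing[of 0 1 \<phi>])
    fix s :: real assume s: "0 \<le> s" "s \<le> 1"
    have line: "((\<lambda>s. x + s *\<^sub>R h) has_derivative (\<lambda>d. d *\<^sub>R h)) (at s)"
      by (auto intro!: derivative_eq_intros)
    have "((\<lambda>s. g (x + s *\<^sub>R h)) has_real_derivative grad_g (x + s *\<^sub>R h) \<bullet> h) (at s)"
      using has_derivative_compose[OF line grad]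
      by (simp add: has_field_derivative_def mult_commute_abs)
    then have D: "(\<phi> has_real_derivative
        (grad_g (x + s *\<^sub>R h) - grad_g x) \<bullet> h - L * s * (norm h)\<^sup>2) (at s)"
      unfolding \<phi>_def by (auto intro!: derivative_eq_intros simp: inner_diff_left)
    have "(grad_g (x + s *\<^sub>R h) - grad_g x) \<bullet> h \<le> norm (grad_g (x + s *\<^sub>R h) - grad_g x) * norm h"
      by (rule norm_cauchy_schwarz)
    also have "\<dots> \<le> L * (s * norm h) * norm h"
      using lipschitz_onD[OF lip, of "x + s *\<^sub>R h" x] s
      by (intro mult_right_mono) (simp_all add: dist_norm)
    finally have "(grad_g (x + s *\<^sub>R h) - grad_g x) \<bullet> h - L * s * (norm h)\<^sup>2 \<le> 0"
      by (simp add: power2_eq_square algebra_simps)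
    with D show "\<exists>d. (\<phi> has_real_derivative d) (at s) \<and> d \<le> 0" by blast
  qed simp
  then show ?thesis unfolding \<phi>_def by simp
qed

lemma gradient_step_decrease:
  fixes g :: "'a::real_inner \<Rightarrow> real" and grad_g :: "'a \<Rightarrow> 'a"
  assumes grad: "\<And>x. (g has_derivative (\<lambda>h. grad_g x \<bullet> h)) (at x)"
    and lip: "L-lipschitz_on UNIV grad_g"
    and eta_pos: "0 < \<eta>" and eta_L: "\<eta> * L \<le> 1"
  shows "\<eta> / 2 * ((norm (grad_g x))\<^sup>2 - (norm (grad_g x - w))\<^sup>2) \<le> g x - g (x - \<eta> *\<^sub>R w)"
proof -
  define v where "v = grad_g x"
  have "L / 2 * (norm (\<eta> *\<^sub>R w))\<^sup>2 = (\<eta> * L) * \<eta> / 2 * (norm w)\<^sup>2"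
    using eta_pos by (simp add: power2_eq_square)
  also have "\<dots> \<le> \<eta> / 2 * (norm w)\<^sup>2"
    using mult_right_mono[OF eta_L, of "\<eta> / 2 * (norm w)\<^sup>2"] eta_pos by simp
  finally have "g (x - \<eta> *\<^sub>R w) \<le> g x - \<eta> * (v \<bullet> w) + \<eta> / 2 * (norm w)\<^sup>2"
    using descent_lemma[OF grad lip, of x "- \<eta> *\<^sub>R w"] unfolding v_def by simp
  moreover have expand: "(norm (v - w))\<^sup>2 = (norm v)\<^sup>2 - 2 * (v \<bullet> w) + (norm w)\<^sup>2"
    by (simp add: power2_norm_eq_inner inner_diff_left inner_diff_right inner_commute)
  have "\<eta> / 2 * ((norm v)\<^sup>2 - (norm (v - w))\<^sup>2) = \<eta> * (v \<bullet> w) - \<eta> / 2 * (norm w)\<^sup>2"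
    unfolding expand by (simp add: algebra_simps)
  ultimately show ?thesis unfolding v_def[symmetric] by linarith
qed

lemma norm_sq_le_of_inexact:
  fixes v w :: "'a::real_normed_vector"
  assumes inexact: "norm (v - w) \<le> a * norm v + b"
    and "0 \<le> a" "a \<le> 1/20" "0 \<le> b" "16 \<le> C"
  shows "(norm w)\<^sup>2 \<le> C / 2 * ((norm v)\<^sup>2 - (norm (v - w))\<^sup>2) + 5 * C * b\<^sup>2"
proof -
  define x E where "x = norm v" and "E = norm (v - w)"
  have "norm w \<le> x + E"
    using norm_triangle_ineq4[of v "v - w"] unfolding x_def E_def by simp
  then have "(norm w)\<^sup>2 \<le> (x + E)\<^sup>2"
    by (intro power_mono) auto
  also have "\<dots> \<le> 2 * x\<^sup>2 + 2 * E\<^sup>2"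
    using zero_le_power2[of "x - E"] unfolding power2_diff power2_sum by linarith
  finally have w_sq: "(norm w)\<^sup>2 \<le> 2 * x\<^sup>2 + 2 * E\<^sup>2" .
  have "E\<^sup>2 \<le> (a * x + b)\<^sup>2"
    using inexact unfolding x_def E_def by (intro power_mono) auto
  also have "\<dots> \<le> 2 * a\<^sup>2 * x\<^sup>2 + 2 * b\<^sup>2"
    using zero_le_power2[of "a * x - b"] unfolding power2_diff power2_sum power_mult_distrib
    by linarith
  also have "\<dots> \<le> x\<^sup>2 / 200 + 2 * b\<^sup>2"
    using mult_right_mono[OF power_mono[of a "1/20" 2] zero_le_power2[of x]] assms(2,3)
    by (simp add: power_divide)
  finally have E_sq: "E\<^sup>2 \<le> x\<^sup>2 / 200 + 2 * b\<^sup>2" .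
  have "(2 + C/2) * E\<^sup>2 \<le> (2 + C/2) * (x\<^sup>2 / 200 + 2 * b\<^sup>2)"
    using E_sq assms(5) by (intro mult_left_mono) auto
  also have "\<dots> = (2 + C/2) / 200 * x\<^sup>2 + (4 + C) * b\<^sup>2"
    by (simp add: algebra_simps)
  also have "\<dots> \<le> (C/2 - 2) * x\<^sup>2 + 5 * C * b\<^sup>2"
    using assms(5) by (intro add_mono mult_right_mono) auto
  finally show ?thesis
    using w_sq unfolding x_def[symmetric] E_def[symmetric] by (simp add: algebra_simps)
qed

lemma inexact_gradient_step_bound:
  fixes g :: "'a::real_inner \<Rightarrow> real" and grad_g G :: "'a \<Rightarrow> 'a"
  assumes grad: "\<And>x. (g has_derivative (\<lambda>h. grad_g x \<bullet> h)) (at x)"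
    and lip: "L-lipschitz_on UNIV grad_g"
    and inexact: "inexact_gradient_oracle a b grad_g G"
    and "0 \<le> a" "a \<le> 1/20" "0 \<le> b" "16 \<le> C"
    and eta_pos: "0 < \<eta>" and "\<eta> \<le> 1" and eta_L: "\<eta> * L \<le> 1"
  shows "\<eta> * (norm (G x))\<^sup>2 \<le> C * (g x - g (x - \<eta> *\<^sub>R G x)) + C * (5 + \<eta>) * b\<^sup>2"
proof -
  let ?D = "(norm (grad_g x))\<^sup>2 - (norm (grad_g x - G x))\<^sup>2"
  have "norm (grad_g x - G x) \<le> a * norm (grad_g x) + b"
    using inexact unfolding inexact_gradient_oracle_def by blast
  then have "\<eta> * (norm (G x))\<^sup>2 \<le> \<eta> * (C / 2 * ?D + 5 * C * b\<^sup>2)"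
    using norm_sq_le_of_inexact assms(4-7) eta_pos by (intro mult_left_mono) auto
  also have "\<dots> = C * (\<eta> / 2 * ?D) + \<eta> * (5 * C * b\<^sup>2)"
    by (simp add: algebra_simps)
  also have "\<dots> \<le> C * (g x - g (x - \<eta> *\<^sub>R G x)) + 5 * C * b\<^sup>2"
    using gradient_step_decrease[OF grad lip eta_pos eta_L, of x "G x"]
      mult_right_mono[of \<eta> 1 "5 * C * b\<^sup>2"] assms(7,9)
    by (intro add_mono mult_left_mono) auto
  also have "\<dots> \<le> C * (g x - g (x - \<eta> *\<^sub>R G x)) + C * (5 + \<eta>) * b\<^sup>2"
    using eta_pos assms(7) by (simp add: algebra_simps)
  finally show ?thesis .
qed

lemma norm_iteration_displacement_sq:
  fixes y u :: "nat \<Rightarrow> 'a::real_normed_vector"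
  assumes step: "\<And>k. y (Suc k) = y k - \<eta> *\<^sub>R u k"
  shows "(norm (y n - y 0))\<^sup>2 \<le> \<eta>\<^sup>2 * real n * (\<Sum>k<n. (norm (u k))\<^sup>2)"
proof -
  have "y n - y 0 = - \<eta> *\<^sub>R (\<Sum>k<n. u k)"
    by (induction n) (simp_all add: step scaleR_add_right)
  then have "norm (y n - y 0) \<le> \<bar>\<eta>\<bar> * (\<Sum>k<n. norm (u k))"
    by (simp add: mult_left_mono norm_sum)
  then have "(norm (y n - y 0))\<^sup>2 \<le> \<eta>\<^sup>2 * (\<Sum>k<n. norm (u k))\<^sup>2"
    using power_mono[of _ _ 2] by (fastforce simp: power_mult_distrib)
  also have "\<dots> \<le> \<eta>\<^sup>2 * ((\<Sum>k<n. (norm (u k))\<^sup>2) * real n)"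
    using sum_squared_le_sum_of_squares[of "\<lambda>k. norm (u k)" "{..<n}"]
    by (intro mult_left_mono) auto
  finally show ?thesis by (simp add: mult_ac)
qed

lemma inexact_gradient_descent_sum_bound:
  fixes g :: "'a::real_inner \<Rightarrow> real" and grad_g G :: "'a \<Rightarrow> 'a" and y :: "nat \<Rightarrow> 'a"
  assumes grad: "\<And>x. (g has_derivative (\<lambda>h. grad_g x \<bullet> h)) (at x)"
    and lip: "L-lipschitz_on UNIV grad_g"
    and inexact: "inexact_gradient_oracle a b grad_g G"
    and "0 \<le> a" "a \<le> 1/20" "0 \<le> b" "16 \<le> C"
    and "0 < \<eta>" "\<eta> \<le> 1" "\<eta> * L \<le> 1"
    and rec: "\<And>t. y (Suc t) = y t - \<eta> *\<^sub>R G (y t)"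
  shows "\<eta> * (\<Sum>k<t. (norm (G (y k)))\<^sup>2) \<le> C * (g (y 0) - g (y t) + (5 + \<eta>) * real t * b\<^sup>2)"
proof -
  have "\<eta> * (\<Sum>k<t. (norm (G (y k)))\<^sup>2) = (\<Sum>k<t. \<eta> * (norm (G (y k)))\<^sup>2)"
    by (simp add: sum_distrib_left)
  also have "\<dots> \<le> (\<Sum>k<t. C * (g (y k) - g (y (Suc k))) + C * (5 + \<eta>) * b\<^sup>2)"
    using inexact_gradient_step_bound[OF grad lip inexact assms(4-10)] rec
    by (intro sum_mono) simp
  also have "\<dots> = C * (g (y 0) - g (y t)) + C * (5 + \<eta>) * real t * b\<^sup>2"
    using sum_lessThan_telescope'[of "\<lambda>k. g (y k)" t]
    by (simp add: sum.distrib sum_distrib_left[symmetric])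
  finally show ?thesis by (simp add: algebra_simps)
qed

theorem mainTheorem3:
  fixes g :: "'a::euclidean_space \<Rightarrow> real"
    and grad_g G :: "'a \<Rightarrow> 'a"
    and y :: "nat \<Rightarrow> 'a"
    and L1 a b \<eta> :: real
  assumes grad: "\<And>x. (g has_derivative (\<lambda>h. grad_g x \<bullet> h)) (at x)"
    and lip: "L1-lipschitz_on UNIV grad_g"
    and inexact: "inexact_gradient_oracle a b grad_g G"
    and a_nonneg: "0 \<le> a" and a_le: "a \<le> 1/20"
    and b_nonneg: "0 \<le> b"
    and eta_pos: "0 < \<eta>" and eta_le1: "\<eta> \<le> 1" and eta_L1: "\<eta> * L1 \<le> 1"
    and rec: "\<And>t. y (Suc t) = y t - \<eta> *\<^sub>R G (y t)"
    and tau_le: "\<tau> \<le> t"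
  shows "(norm (y \<tau> - y 0))\<^sup>2
         \<le> 16 * \<eta> * real t * ((1 + a)\<^sup>2 / (1 - a))
             * (g (y 0) - g (y t) + (5 + \<eta>) * real t * b\<^sup>2)"
proof -
  define C where "C = 16 * ((1 + a)\<^sup>2 / (1 - a))"
  define S where "S n = (\<Sum>k<n. (norm (G (y k)))\<^sup>2)" for n
  have "1 - a \<le> (1 + a)\<^sup>2" "0 < 1 - a"
    using a_nonneg a_le by (auto simp: power2_eq_square algebra_simps)
  then have C16: "16 \<le> C"
    unfolding C_def by (simp add: le_divide_eq)
  have sum_bound: "\<eta> * S t \<le> C * (g (y 0) - g (y t) + (5 + \<eta>) * real t * b\<^sup>2)"
    unfolding S_def using rec by (intro inexact_gradient_descent_sum_bound[OF grad lip inexact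
        a_nonneg a_le b_nonneg C16 eta_pos eta_le1 eta_L1])
  have "S \<tau> \<le> S t"
    unfolding S_def using tau_le by (intro sum_mono2) auto
  moreover have "0 \<le> S \<tau>"
    unfolding S_def by (intro sum_nonneg) auto
  ultimately have "real \<tau> * S \<tau> \<le> real t * S t"
    using tau_le by (intro mult_mono) auto
  then have "\<eta>\<^sup>2 * real \<tau> * S \<tau> \<le> (\<eta> * real t) * (\<eta> * S t)"
    using eta_pos mult_left_mono[of "real \<tau> * S \<tau>" "real t * S t" "\<eta>\<^sup>2"]
    by (simp add: power2_eq_square mult_ac)
  also have "\<dots> \<le> (\<eta> * real t) * (C * (g (y 0) - g (y t) + (5 + \<eta>) * real t * b\<^sup>2))"
    using sum_bound eta_pos by (intro mult_left_mono) auto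
  finally show ?thesis
    using norm_iteration_displacement_sq[of y \<eta> "\<lambda>k. G (y k)" \<tau>] rec
    unfolding C_def S_def by (simp add: mult_ac)
qed

end
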